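(* Let $H, W \ge 1$ be integers and $L=HW$. For each $s \in \{0,1,\dots,H+W-2\}$ let $i_{\min}(s)=\max(0,\,s-(W-1))$ and $i_{\max}(s)=\min(s,\,H-1)$. Let $\mathbf{d}^{(s)}$ be the ordered list of points $(i,\,s-i)$ and $\mathbf{a}^{(s)}$ the ordered list of points $(i,\,W-1-(s-i))$, in both cases for $i=i_{\min}(s),\dots,i_{\max}(s)$ in increasing order. Set $\operatorname{diag}(s)=\mathbf{d}^{(s)}$, $\operatorname{antidiag}(s)=\mathbf{a}^{(s)}$ for $s$ even and $\operatorname{diag}(s)=\operatorname{reverse}(\mathbf{d}^{(s)})$, $\operatorname{antidiag}(s)=\operatorname{reverse}(\mathbf{a}^{(s)})$ for $s$ odd. Let $\mathbf{i}_{\text{diag}}$, $\mathbf{i}_{\text{antidiag}}\in\mathbb{Z}^L$ be obtained by concatenating $\operatorname{diag}(s)$, resp. $\operatorname{antidiag}(s)$, over $s=0,\dots,H+W-2$ and replacing each point $(i,j)$ by $iW+j$. Let $\mathbf{I}_{\text{fwd}}\in\mathbb{Z}^{4\times L}$ have rows $\mathbf{i}_{\text{diag}}$, $\mathbf{i}_{\text{antidiag}}$, $\operatorname{flip}(\mathbf{i}_{\text{diag}})$, $\operatorname{flip}(\mathbf{i}_{\text{antidiag}})$ (indexed $k=0,1,2,3$), and let $\mathbf{I}_{\text{inv}}\in\mathbb{Z}^{4\times L}$ be defined by $\mathbf{I}_{\text{inv}}[k,\mathbf{I}_{\text{fwd}}[k,j]]=j$ for all $k\in\{0,1,2,3\}$,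 $j\in\{0,\dots,L-1\}$. Let $\mathbf{z}\in\mathbb{R}^L$ be any vector and for each $k$ define $\mathbf{z}^{\text{scan}}_k\in\mathbb{R}^L$ by $\mathbf{z}^{\text{scan}}_k[j]=\mathbf{z}[\mathbf{I}_{\text{fwd}}[k,j]]$. Then for every $k\in\{0,1,2,3\}$ and every $\ell\in\{0,\dots,L-1\}$, $\mathbf{z}^{\text{scan}}_k[\mathbf{I}_{\text{inv}}[k,\ell]]=\mathbf{z}[\ell]$; that is, $\mathbf{z}^{\text{scan}}_k[\mathbf{I}_{\text{inv}}[k,:]]=\mathbf{z}$.
   Context: The grid is $\{0,\dots,H-1\}\times\{0,\dots,W-1\}$ with points $(i,j)$; $iW+j$ is the row-major (raster) index. $\operatorname{reverse}$ and $\operatorname{flip}$ reverse the order of a finite sequence. Vectors of length $L$ are indexed by $\{0,\dots,L-1\}$, and $\mathbf{v}[\mathbf{u}]$ for an index vector $\mathbf{u}$ denotes the vector with entries $\mathbf{v}[\mathbf{u}[j]]$. *)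

theory Defs
  imports Complex_Main
begin

definition i_min :: "nat \<Rightarrow> nat \<Rightarrow> nat \<Rightarrow> nat" where
  "i_min H W s = nat (max 0 (int s - (int W - 1)))"

definition i_max :: "nat \<Rightarrow> nat \<Rightarrow> nat \<Rightarrow> nat" where
  "i_max H W s = min s (H - 1)"

definition dpts :: "nat \<Rightarrow> nat \<Rightarrow> nat \<Rightarrow> (nat \<times> nat) list" where
  "dpts H W s = map (\<lambda>i. (i, s - i)) [i_min H W s ..< i_max H W s + 1]"

definition apts :: "nat \<Rightarrow> nat \<Rightarrow> nat \<Rightarrow> (nat \<times> nat) list" where
  "apts H W s = map (\<lambda>i. (i, W - 1 - (s - i))) [i_min H W s ..< i_max H W s + 1]"

definition diag :: "nat \<Rightarrow> nat \<Rightarrow> nat \<Rightarrow> (nat \<times> nat) list" where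
  "diag H W s = (if even s then dpts H W s else rev (dpts H W s))"

definition antidiag :: "nat \<Rightarrow> nat \<Rightarrow> nat \<Rightarrow> (nat \<times> nat) list" where
  "antidiag H W s = (if even s then apts H W s else rev (apts H W s))"

definition raster :: "nat \<Rightarrow> nat \<times> nat \<Rightarrow> nat" where
  "raster W p = fst p * W + snd p"

definition i_diag :: "nat \<Rightarrow> nat \<Rightarrow> nat list" where
  "i_diag H W = map (raster W) (concat (map (diag H W) [0 ..< H + W - 1]))"

definition i_antidiag :: "nat \<Rightarrow> nat \<Rightarrow> nat list" where
  "i_antidiag H W = map (raster W) (concat (map (antidiag H W) [0 ..< H + W - 1]))"

definition I_fwd :: "nat \<Rightarrow> nat \<Rightarrow> nat list list" where
  "I_fwd H W = [i_diag H W, i_antidiag H W, rev (i_diag H W), rev (i_antidiag H W)]"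

definition z_scan :: "nat \<Rightarrow> nat \<Rightarrow> real list \<Rightarrow> nat \<Rightarrow> real list" where
  "z_scan H W z k = map (\<lambda>j. z ! (I_fwd H W ! k ! j)) [0 ..< H * W]"

end

theory Submission
  imports Defs
begin

text \<open>Each row of \<open>I_fwd\<close> lists every raster index of the grid exactly once: the diagonals
  \<open>i + j = s\<close> (resp. the antidiagonals \<open>i + (W - 1 - j) = s\<close>) for \<open>s < H + W - 1\<close>
  partition the grid, reversing a segment or the whole list does not change this, and
  \<open>(i, j) \<mapsto> i W + j\<close> is a bijection from the grid onto \<open>{..<H W}\<close>. Gathering with a
  permutation and then with a left inverse of it gives back the original vector.\<close>

abbreviation grid :: "nat \<Rightarrow> nat \<Rightarrow> (nat \<times> nat) set" where
  "grid H W \<equiv> {..<H} \<times> {..<W}"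

lemma set_concat_level_lists:
  assumes "\<And>s. set (g s) = {p \<in> A. \<phi> p = s}"
  shows "set (concat (map g [0..<m])) = {p \<in> A. \<phi> p < m}"
  using assms by auto

lemma distinct_concat_level_lists:
  assumes "\<And>s. distinct (g s)" and "\<And>s. set (g s) = {p \<in> A. \<phi> p = s}"
  shows "distinct (concat (map g [0..<m]))"
proof (induction m)
  case (Suc m)
  have "set (concat (map g [0..<m])) \<inter> set (g m) = {}"
    using set_concat_level_lists[of g A \<phi> m] assms(2) by auto
  with Suc assms(1) show ?case by simp
qed simp

lemma bij_betw_raster: "bij_betw (raster W) (grid H W) {..<H * W}"
proof (rule bij_betw_byWitness[where f' = "\<lambda>l. (l div W, l mod W)"])
  show "\<forall>p \<in> grid H W. (raster W p div W, raster W p mod W) = p"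
    by (auto simp: raster_def)
  show "\<forall>l \<in> {..<H * W}. raster W (l div W, l mod W) = l"
    by (simp add: raster_def)
  show "raster W ` grid H W \<subseteq> {..<H * W}"
  proof (rule image_subsetI)
    fix p assume "p \<in> grid H W"
    then obtain i j where "p = (i, j)" and "i < H" and "j < W" by blast
    then have "i * W + j < (i + 1) * W" by simp
    also have "\<dots> \<le> H * W" using \<open>i < H\<close> by (intro mult_le_mono1) simp
    finally show "raster W p \<in> {..<H * W}" using \<open>p = (i, j)\<close> by (simp add: raster_def)
  qed
  show "(\<lambda>l. (l div W, l mod W)) ` {..<H * W} \<subseteq> grid H W"
  proof (rule image_subsetI)
    fix l assume "l \<in> {..<H * W}"
    then have "l div W < H" and "W > 0"
      by (auto simp: less_mult_imp_div_less intro: gr0I)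
    then show "(l div W, l mod W) \<in> grid H W" by simp
  qed
qed

lemma raster_concat_level_lists:
  assumes "\<And>s. distinct (g s)"
    and "\<And>s. set (g s) = {p \<in> grid H W. \<phi> p = s}"
    and "\<And>p. p \<in> grid H W \<Longrightarrow> \<phi> p < m"
  shows "distinct (map (raster W) (concat (map g [0..<m])))"
    and "set (map (raster W) (concat (map g [0..<m]))) = {..<H * W}"
proof -
  have "set (concat (map g [0..<m])) = grid H W"
    using set_concat_level_lists[of g, OF assms(2)] assms(3) by auto
  with distinct_concat_level_lists[of g, OF assms(1,2)] bij_betw_raster[of W H]
  show "distinct (map (raster W) (concat (map g [0..<m])))"
    and "set (map (raster W) (concat (map g [0..<m]))) = {..<H * W}"
    by (auto simp: distinct_map bij_betw_def)
qed

lemma set_dpts: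
  assumes "H \<ge> 1" and "W \<ge> 1"
  shows "set (dpts H W s) = {(i, j) \<in> grid H W. i + j = s}"
  using assms unfolding dpts_def i_min_def i_max_def by (force simp: image_iff)

lemma set_apts:
  assumes "H \<ge> 1" and "W \<ge> 1"
  shows "set (apts H W s) = {(i, j) \<in> grid H W. i + (W - 1 - j) = s}"
  using assms unfolding apts_def i_min_def i_max_def by (force simp: image_iff)

lemma distinct_dpts: "distinct (dpts H W s)"
  unfolding dpts_def by (auto simp: distinct_map inj_on_def)

lemma distinct_apts: "distinct (apts H W s)"
  unfolding apts_def by (auto simp: distinct_map inj_on_def)

lemma i_diag_enumerates_raster:
  assumes "H \<ge> 1" and "W \<ge> 1"
  shows "distinct (i_diag H W)" and "set (i_diag H W) = {..<H * W}"
proof -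
  let ?level = "\<lambda>(i, j). i + j"
  have "distinct (diag H W s)" for s
    by (simp add: diag_def distinct_dpts)
  moreover have "set (diag H W s) = {p \<in> grid H W. ?level p = s}" for s
    using set_dpts[OF assms] by (auto simp: diag_def)
  moreover have "?level p < H + W - 1" if "p \<in> grid H W" for p
    using that by auto
  ultimately show "distinct (i_diag H W)" and "set (i_diag H W) = {..<H * W}"
    unfolding i_diag_def by (fact raster_concat_level_lists)+
qed

lemma i_antidiag_enumerates_raster:
  assumes "H \<ge> 1" and "W \<ge> 1"
  shows "distinct (i_antidiag H W)" and "set (i_antidiag H W) = {..<H * W}"
proof -
  let ?level = "\<lambda>(i, j). i + (W - 1 - j)"
  have "distinct (antidiag H W s)" for s
    by (simp add: antidiag_def distinct_apts)
  moreover have "set (antidiag H W s) = {p \<in> grid H W. ?level p = s}" for s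
    using set_apts[OF assms] by (auto simp: antidiag_def)
  moreover have "?level p < H + W - 1" if "p \<in> grid H W" for p
    using that by auto
  ultimately show "distinct (i_antidiag H W)" and "set (i_antidiag H W) = {..<H * W}"
    unfolding i_antidiag_def by (fact raster_concat_level_lists)+
qed

lemma I_fwd_rows_enumerate_raster:
  assumes "H \<ge> 1" and "W \<ge> 1" and "r \<in> set (I_fwd H W)"
  shows "distinct r" and "set r = {..<H * W}"
proof -
  from assms(3) consider "r = i_diag H W" | "r = i_antidiag H W"
    | "r = rev (i_diag H W)" | "r = rev (i_antidiag H W)"
    by (auto simp: I_fwd_def)
  then have "distinct r \<and> set r = {..<H * W}"
    by cases (simp_all add: i_diag_enumerates_raster[OF assms(1,2)]
        i_antidiag_enumerates_raster[OF assms(1,2)])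
  then show "distinct r" and "set r = {..<H * W}" by simp_all
qed

lemma gather_by_left_inverse:
  assumes "distinct r" and "set r = {..<n}"
    and "\<forall>j<n. r' (r ! j) = j" and "l < n"
  shows "map (\<lambda>j. f (r ! j)) [0..<n] ! r' l = f l"
proof -
  have "length r = n" using distinct_card[OF assms(1)] assms(2) by simp
  moreover obtain j where "j < length r" and "r ! j = l"
    using assms(2,4) by (metis in_set_conv_nth lessThan_iff)
  ultimately have "r' l = j" using assms(3) by auto
  with \<open>r ! j = l\<close> \<open>j < length r\<close> \<open>length r = n\<close> show ?thesis by auto
qed

theorem mainTheorem3:
  fixes H W :: nat and z :: "real list" and I_inv :: "nat \<Rightarrow> nat \<Rightarrow> nat"
  assumes "H \<ge> 1" and "W \<ge> 1"
    and "length z = H * W"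
    and "\<forall>k<4. \<forall>j<H * W. I_inv k (I_fwd H W ! k ! j) = j"
  shows "\<forall>k<4. \<forall>l<H * W. z_scan H W z k ! (I_inv k l) = z ! l"
proof (intro allI impI)
  fix k l :: nat assume "k < 4" and "l < H * W"
  then have row: "I_fwd H W ! k \<in> set (I_fwd H W)"
    by (intro nth_mem) (simp add: I_fwd_def)
  show "z_scan H W z k ! (I_inv k l) = z ! l"
    unfolding z_scan_def
    using gather_by_left_inverse[OF I_fwd_rows_enumerate_raster[OF assms(1,2) row]]
      assms(4) \<open>k < 4\<close> \<open>l < H * W\<close> by blast
qed

end
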